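(* Let $k$ be a field of characteristic zero, $n\ge1$, $S=k[x_1,\ldots,x_n]$, and $(S,L)$ a triangularizable Lie–Rinehart algebra with enveloping algebra $U$. Then the inclusion $S\subseteq U$ induces an isomorphism $H^0(S,U)\cong S$; that is, $H^0(S,U)=\{u\in U:[u,s]=0\text{ for all }s\in S\}$ equals $S$.
   Context: Triangularizable: $L\subseteq\operatorname{Der}(S)$ is an $S$-submodule and Lie subalgebra which is a free $S$-module with basis of derivations $\alpha_1,\ldots,\alpha_n$ such that $\alpha_i(x_j)=0$ for $i>j$ and $\alpha_1(x_1)\cdots\alpha_n(x_n)\ne0$. $U$ is the universal enveloping algebra of $(S,L)$ (containing $S$ as a subalgebra). $H^\bullet(S,U)=\operatorname{Ext}^\bullet_{S\otimes S}(S,U)$ is the Hochschild cohomology of $S$ with values in the $S$-bimodule $U$; in degree zero it is the centralizer of $S$ in $U$. *)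

theory Defs
  imports Main "HOL-Library.Poly_Mapping"
begin

text \<open>Polynomial ring S = k[x_i : i in 'n] (variables indexed by a finite linearly
ordered type 'n, so n = CARD('n) >= 1), realised as finitely supported maps from
monomials (exponent vectors) to coefficients.\<close>

type_synonym ('n, 'k) mpoly = "('n \<Rightarrow>\<^sub>0 nat) \<Rightarrow>\<^sub>0 'k"

definition Var :: "'n \<Rightarrow> ('n, 'k::comm_ring_1) mpoly" where
  "Var j = Poly_Mapping.single (Poly_Mapping.single j 1) 1"

definition Const :: "'k \<Rightarrow> ('n, 'k::comm_ring_1) mpoly" where
  "Const c = Poly_Mapping.single 0 c"

definition is_derivation :: "(('n, 'k::comm_ring_1) mpoly \<Rightarrow> ('n, 'k) mpoly) \<Rightarrow> bool" where
  "is_derivation D \<longleftrightarrow>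
     (\<forall>f g. D (f + g) = D f + D g) \<and>
     (\<forall>c f. D (Const c * f) = Const c * D f) \<and>
     (\<forall>f g. D (f * g) = D f * g + f * D g)"

definition Der :: "(('n, 'k::comm_ring_1) mpoly \<Rightarrow> ('n, 'k) mpoly) set" where
  "Der = {D. is_derivation D}"

definition triangularizable ::
  "(('n::{finite,linorder}, 'k::comm_ring_1) mpoly \<Rightarrow> ('n, 'k) mpoly) set \<Rightarrow>
   ('n \<Rightarrow> ('n, 'k) mpoly \<Rightarrow> ('n, 'k) mpoly) \<Rightarrow> bool" where
  "triangularizable L \<alpha> \<longleftrightarrow>
     L \<subseteq> Der \<and>
     (\<lambda>f. 0) \<in> L \<and>
     (\<forall>D\<in>L. \<forall>E\<in>L. (\<lambda>f. D f + E f) \<in> L) \<and>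
     (\<forall>s. \<forall>D\<in>L. (\<lambda>f. s * D f) \<in> L) \<and>
     (\<forall>D\<in>L. \<forall>E\<in>L. (\<lambda>f. D (E f) - E (D f)) \<in> L) \<and>
     (\<forall>i. \<alpha> i \<in> L) \<and>
     (\<forall>D\<in>L. \<exists>!s :: 'n \<Rightarrow> ('n, 'k) mpoly. D = (\<lambda>f. \<Sum>i\<in>UNIV. s i * \<alpha> i f)) \<and>
     (\<forall>i j. j < i \<longrightarrow> \<alpha> i (Var j) = 0) \<and>
     (\<Prod>i\<in>UNIV. \<alpha> i (Var i)) \<noteq> 0"

text \<open>The free associative unital k-algebra on generators 'g: finitely supported
k-linear combinations of words.\<close>

type_synonym ('g, 'k) freealg = "'g list \<Rightarrow>\<^sub>0 'k"

definition fmult :: "('g, 'k::comm_ring_1) freealg \<Rightarrow> ('g, 'k) freealg \<Rightarrow> ('g, 'k) freealg" where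
  "fmult p q = (\<Sum>u\<in>Poly_Mapping.keys p. \<Sum>v\<in>Poly_Mapping.keys q.
                  Poly_Mapping.single (u @ v) (Poly_Mapping.lookup p u * Poly_Mapping.lookup q v))"

definition fconst :: "'k \<Rightarrow> ('g, 'k::comm_ring_1) freealg" where
  "fconst c = Poly_Mapping.single [] c"

definition fgen :: "'g \<Rightarrow> ('g, 'k::comm_ring_1) freealg" where
  "fgen g = Poly_Mapping.single [g] 1"

inductive_set twosided_ideal :: "('g, 'k::comm_ring_1) freealg set \<Rightarrow> ('g, 'k) freealg set"
  for R where
  base: "r \<in> R \<Longrightarrow> r \<in> twosided_ideal R"
| zero: "0 \<in> twosided_ideal R"
| add: "a \<in> twosided_ideal R \<Longrightarrow> b \<in> twosided_ideal R \<Longrightarrow> a + b \<in> twosided_ideal R"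
| lmult: "a \<in> twosided_ideal R \<Longrightarrow> fmult c a \<in> twosided_ideal R"
| rmult: "a \<in> twosided_ideal R \<Longrightarrow> fmult a c \<in> twosided_ideal R"

text \<open>Universal enveloping algebra U of (S, L) (Rinehart): the free k-algebra on
generators iota_S(s) (s in S) and iota_L(D) (D in L) modulo the relations below.
Generators iota_L(D) for D not in L are killed. U = freealg / UEA_ideal L.\<close>

type_synonym ('n, 'k) lrgen = "('n, 'k) mpoly + (('n, 'k) mpoly \<Rightarrow> ('n, 'k) mpoly)"

definition iS :: "('n, 'k::comm_ring_1) mpoly \<Rightarrow> (('n, 'k) lrgen, 'k) freealg" where
  "iS s = fgen (Inl s)"

definition iL :: "(('n, 'k::comm_ring_1) mpoly \<Rightarrow> ('n, 'k) mpoly) \<Rightarrow> (('n, 'k) lrgen, 'k) freealg" where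
  "iL D = fgen (Inr D)"

definition UEA_relations ::
  "(('n, 'k::comm_ring_1) mpoly \<Rightarrow> ('n, 'k) mpoly) set \<Rightarrow> (('n, 'k) lrgen, 'k) freealg set" where
  "UEA_relations L =
     {iS (s + t) - iS s - iS t | s t. True} \<union>
     {iS (s * t) - fmult (iS s) (iS t) | s t. True} \<union>
     {iS (Const c) - fconst c | c. True} \<union>
     {iL (\<lambda>f. D f + E f) - iL D - iL E | D E. D \<in> L \<and> E \<in> L} \<union>
     {iL (\<lambda>f. s * D f) - fmult (iS s) (iL D) | s D. D \<in> L} \<union>
     {fmult (iL D) (iL E) - fmult (iL E) (iL D) - iL (\<lambda>f. D (E f) - E (D f)) | D E. D \<in> L \<and> E \<in> L} \<union>
     {fmult (iL D) (iS s) - fmult (iS s) (iL D) - iS (D s) | s D. D \<in> L} \<union>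
     {iL D | D. D \<notin> L}"

definition UEA_ideal ::
  "(('n, 'k::comm_ring_1) mpoly \<Rightarrow> ('n, 'k) mpoly) set \<Rightarrow> (('n, 'k) lrgen, 'k) freealg set" where
  "UEA_ideal L = twosided_ideal (UEA_relations L)"

end

theory Submission
  imports Defs "HOL-Computational_Algebra.Polynomial" "HOL-Library.Multiset"
begin

text \<open>
  The free algebra acts on \<open>S\<close> through \<open>rep\<close>: \<open>iS s\<close> by multiplication and \<open>iL D\<close> as the
  derivation \<open>D\<close> (as \<open>0\<close> if \<open>D \<notin> L\<close>). This action kills \<open>UEA_ideal L\<close>, so \<open>U\<close> acts on \<open>S\<close>,
  and \<open>rep (iS s) 1 = s\<close> shows that \<open>S \<rightarrow> U\<close> is injective. If \<open>u\<close> commutes with \<open>S\<close>, then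
  \<open>rep u\<close> is \<open>S\<close>-linear, i.e. multiplication by \<open>s = rep u 1\<close>, so \<open>u - s\<close> acts by zero.
  Everything thus rests on the faithfulness of the action, proved by induction on the order.

  By the commutation relations, an element of order d is, modulo lower order, a combination
  of \<open>c\<^sub>v \<alpha>(v\<^sub>1) \<dots> \<alpha>(v\<^sub>d)\<close> over sorted words v. Applied to \<open>g ^ N\<close> it gives \<open>g ^ (N - d)\<close> times
  a polynomial in N whose top coefficient is the principal symbol
  \<open>\<Sum>\<^sub>v c\<^sub>v \<alpha>(v\<^sub>1)(g) \<dots> \<alpha>(v\<^sub>d)(g)\<close>; in characteristic zero it vanishes for every g if the element
  acts by zero. Substituting \<open>g = \<Sum>\<^sub>j T ^ e\<^sub>j * x\<^sub>j\<close> with decreasing exponents \<open>e\<^sub>j\<close>,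
  triangularity turns \<open>\<alpha>(v\<^sub>1)(g) \<dots> \<alpha>(v\<^sub>d)(g)\<close> into a polynomial in T of degree
  \<open>e(v\<^sub>1) + \<dots> + e(v\<^sub>d)\<close>; for \<open>e\<^sub>j = B ^ card {j'. j < j'}\<close> with \<open>B > d\<close> these degrees are
  distinct base-B expansions, so all \<open>c\<^sub>v\<close> vanish.
\<close>

section \<open>The free algebra\<close>

text \<open>Concatenation makes \<open>freealg\<close> the monoid ring of the free monoid, with \<open>fmult\<close> as
  its product.\<close>
instantiation list :: (type) monoid_add
begin
definition zero_list_def: "(0::'a list) = []"
definition plus_list_def: "(xs::'a list) + ys = xs @ ys"
instance by standard (auto simp: zero_list_def plus_list_def)
end

lemma poly_mapping_sum_single:
  "p = (\<Sum>w\<in>Poly_Mapping.keys p. Poly_Mapping.single w (Poly_Mapping.lookup p w))"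
  by (rule poly_mapping_eqI) (auto simp: lookup_sum lookup_single when_def in_keys_iff)

lemma fmult_eq_times: "fmult p q = p * (q :: ('g, 'k::comm_ring_1) freealg)"
proof -
  have "p * q = (\<Sum>u\<in>Poly_Mapping.keys p. Poly_Mapping.single u (Poly_Mapping.lookup p u)) *
                (\<Sum>v\<in>Poly_Mapping.keys q. Poly_Mapping.single v (Poly_Mapping.lookup q v))"
    using poly_mapping_sum_single[of p] poly_mapping_sum_single[of q] by simp
  then show ?thesis
    by (simp add: fmult_def sum_product mult_single plus_list_def)
qed

lemma one_freealg: "(1 :: ('g, 'k::comm_ring_1) freealg) = Poly_Mapping.single [] 1"
  by (metis single_one zero_list_def)

lemma fconst_uminus_one: "fconst (-1) = (-1 :: ('g, 'k::comm_ring_1) freealg)"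
  by (simp add: fconst_def single_uminus one_freealg)

lemma single_Cons: "Poly_Mapping.single (x # w) c = fgen x * (Poly_Mapping.single w c :: ('g, 'k::comm_ring_1) freealg)"
  by (simp add: fgen_def mult_single plus_list_def)

lemma twosided_ideal_mult_left: "a \<in> twosided_ideal R \<Longrightarrow> c * a \<in> twosided_ideal R"
  using twosided_ideal.lmult[of a R c] by (simp add: fmult_eq_times)

lemma twosided_ideal_mult_right: "a \<in> twosided_ideal R \<Longrightarrow> a * c \<in> twosided_ideal R"
  using twosided_ideal.rmult[of a R c] by (simp add: fmult_eq_times)

lemma twosided_ideal_uminus: "a \<in> twosided_ideal R \<Longrightarrow> - a \<in> twosided_ideal R"
  using twosided_ideal_mult_left[of a R "-1"] by simp

lemma twosided_ideal_diff:
  "a \<in> twosided_ideal R \<Longrightarrow> b \<in> twosided_ideal R \<Longrightarrow> a - b \<in> twosided_ideal R"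
  using twosided_ideal.add[OF _ twosided_ideal_uminus, of a R b] by simp

lemma twosided_ideal_sum:
  "(\<And>x. x \<in> X \<Longrightarrow> f x \<in> twosided_ideal R) \<Longrightarrow> sum f X \<in> twosided_ideal R"
  by (induction X rule: infinite_finite_induct) (auto intro: twosided_ideal.intros)

section \<open>Derivations\<close>

lemma Const_zero [simp]: "Const 0 = (0 :: ('n, 'k::comm_ring_1) mpoly)"
  by (simp add: Const_def)

lemma Const_one [simp]: "Const 1 = (1 :: ('n, 'k::comm_ring_1) mpoly)"
  by (simp add: Const_def)

lemma Const_add: "Const (a + b) = Const a + (Const b :: ('n, 'k::comm_ring_1) mpoly)"
  by (simp add: Const_def single_add)

lemma Const_mult: "Const (a * b) = Const a * (Const b :: ('n, 'k::comm_ring_1) mpoly)"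
  by (simp add: Const_def mult_single)

context
  fixes D :: "('n, 'k::comm_ring_1) mpoly \<Rightarrow> ('n, 'k) mpoly"
  assumes der: "is_derivation D"
begin

lemma derivation_add: "D (f + g) = D f + D g"
  using der unfolding is_derivation_def by blast

lemma derivation_Const_mult: "D (Const c * f) = Const c * D f"
  using der unfolding is_derivation_def by blast

lemma derivation_mult: "D (f * g) = D f * g + f * D g"
  using der unfolding is_derivation_def by blast

lemma derivation_zero: "D 0 = 0"
  using derivation_add[of 0 0] by simp

lemma derivation_one: "D 1 = 0"
  using derivation_mult[of 1 1] by simp

lemma derivation_sum: "D (sum h X) = (\<Sum>x\<in>X. D (h x))"
  by (induction X rule: infinite_finite_induct) (auto simp: derivation_zero derivation_add)

lemma derivation_of_nat_mult: "D (of_nat n * f) = of_nat n * D f"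
  using derivation_Const_mult[of "of_nat n" f] by (simp add: Const_def)

lemma derivation_power: "g * D (g ^ n) = of_nat n * g ^ n * D g"
  by (induction n) (simp_all add: derivation_one derivation_mult algebra_simps)

lemma derivation_poly_of_nat: "D (poly Q (of_nat N)) = poly (map_poly D Q) (of_nat N)"
  by (induction Q) (simp_all add: map_poly_pCons derivation_zero derivation_add derivation_of_nat_mult)

lemma derivation_power_mult:
  "g * D (g ^ n * F) = of_nat n * D g * (g ^ n * F) + g ^ n * (g * D F)"
proof -
  have "g * D (g ^ n * F) = (g * D (g ^ n)) * F + g ^ n * (g * D F)"
    by (simp add: derivation_mult algebra_simps)
  then show ?thesis by (simp add: derivation_power algebra_simps)
qed

text \<open>Multiplying by \<open>g\<close> clears the denominator of \<open>D (g ^ N) = N g ^ (N - 1) D g\<close>.\<close>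
lemma derivation_power_expansion_step:
  assumes "g ^ l * F = g ^ N * poly Q (of_nat N)"
  shows "g ^ Suc l * D F = g ^ N * poly (pCons 0 (smult (D g) Q) + smult g (map_poly D Q)
                                           - smult (of_nat l * D g) Q) (of_nat N)"
proof -
  let ?P = "poly Q (of_nat N)"
  have "of_nat l * D g * (g ^ N * ?P) + g ^ Suc l * D F =
        of_nat N * D g * (g ^ N * ?P) + g ^ N * (g * D ?P)"
    using derivation_power_mult[of g l F] derivation_power_mult[of g N ?P] unfolding assms by simp
  then show ?thesis
    by (simp add: derivation_poly_of_nat algebra_simps)
qed

end

text \<open>That is, \<open>Ds\<close> applied to \<open>g ^ N\<close> is \<open>g ^ (N - length Ds) * Q N\<close>, written without division.\<close>
lemma derivations_power_expansion:
  fixes Ds :: "(('n, 'k::comm_ring_1) mpoly \<Rightarrow> ('n, 'k) mpoly) list"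
  assumes "\<forall>D\<in>set Ds. is_derivation D"
  shows "\<exists>Q. degree Q \<le> length Ds \<and> coeff Q (length Ds) = (\<Prod>D\<leftarrow>Ds. D g) \<and>
             (\<forall>N. g ^ length Ds * foldr (\<lambda>D. D) Ds (g ^ N) = g ^ N * poly Q (of_nat N))"
  using assms
proof (induction Ds)
  case Nil
  show ?case by (rule exI[of _ 1]) simp
next
  case (Cons D Ds)
  let ?l = "length Ds"
  from Cons obtain Q where deg: "degree Q \<le> ?l" and top: "coeff Q ?l = (\<Prod>D\<leftarrow>Ds. D g)"
    and expand: "\<forall>N. g ^ ?l * foldr (\<lambda>D. D) Ds (g ^ N) = g ^ N * poly Q (of_nat N)"
    by auto
  have der: "is_derivation D" using Cons.prems by simp
  define Q' where "Q' = pCons 0 (smult (D g) Q) + smult g (map_poly D Q) - smult (of_nat ?l * D g) Q"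
  have "degree Q' \<le> Suc ?l"
    unfolding Q'_def using deg degree_pCons_le[of 0 "smult (D g) Q"] map_poly_degree_leq[of D Q]
    by (intro degree_add_le degree_diff_le) (auto intro: le_trans[OF degree_smult_le])
  moreover have "coeff Q' (Suc ?l) = (\<Prod>D\<leftarrow>D # Ds. D g)"
    using deg top by (simp add: Q'_def coeff_map_poly derivation_zero[OF der] coeff_eq_0)
  moreover have "g ^ Suc ?l * foldr (\<lambda>D. D) (D # Ds) (g ^ N) = g ^ N * poly Q' (of_nat N)" for N
    unfolding Q'_def using derivation_power_expansion_step[OF der expand[rule_format]] by simp
  ultimately show ?case by auto
qed

section \<open>Polynomials and base expansions\<close>

lemma poly_eq_0_if_zero_at_nats:
  fixes p :: "'a::{idom,ring_char_0} poly"
  assumes "\<And>N. poly p (of_nat N) = 0"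
  shows "p = 0"
proof (rule ccontr)
  assume "p \<noteq> 0"
  then have "finite {x. poly p x = 0}" by (rule poly_roots_finite)
  moreover have "range (of_nat :: nat \<Rightarrow> 'a) \<subseteq> {x. poly p x = 0}" using assms by auto
  ultimately have "finite (range (of_nat :: nat \<Rightarrow> 'a))" by (rule finite_subset[rotated])
  then show False using finite_imageD[OF _ inj_of_nat] by auto
qed

lemma poly_prod_list_map: "poly (\<Prod>x\<leftarrow>xs. f x) y = (\<Prod>x\<leftarrow>xs. poly (f x) y)"
  by (induction xs) simp_all

lemma degree_prod_list_eq:
  "0 \<notin> set ps \<Longrightarrow> degree (prod_list ps :: 'a::idom poly) = (\<Sum>p\<leftarrow>ps. degree p)"
  by (induction ps) (simp_all add: degree_mult_eq prod_list_zero_iff)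

lemma poly_lin_indep_distinct_degrees:
  fixes P :: "'b \<Rightarrow> 'a::idom poly"
  assumes "finite V" and "inj_on (\<lambda>v. degree (P v)) V" and "\<And>v. v \<in> V \<Longrightarrow> P v \<noteq> 0"
    and "(\<Sum>v\<in>V. smult (c v) (P v)) = 0" and "v \<in> V"
  shows "c v = 0"
proof (rule ccontr)
  assume "c v \<noteq> 0"
  define V' where "V' = {v\<in>V. c v \<noteq> 0}"
  have "finite V'" "V' \<noteq> {}" using assms(1,5) \<open>c v \<noteq> 0\<close> by (auto simp: V'_def)
  then obtain v0 where "v0 \<in> V'" and v0_max: "\<And>u. u \<in> V' \<Longrightarrow> degree (P u) \<le> degree (P v0)"
    using Max_in[of "(\<lambda>u. degree (P u)) ` V'"] Max_ge[of "(\<lambda>u. degree (P u)) ` V'"] by fastforce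
  let ?d = "degree (P v0)"
  have "c u * coeff (P u) ?d = 0" if "u \<in> V - {v0}" for u
  proof (cases "u \<in> V'")
    case True
    then have "degree (P u) \<noteq> ?d"
      using that \<open>v0 \<in> V'\<close> inj_onD[OF assms(2)] by (auto simp: V'_def)
    then have "degree (P u) < ?d" using v0_max[OF True] by simp
    then show ?thesis by (simp add: coeff_eq_0)
  qed (use that in \<open>simp add: V'_def\<close>)
  then have "(\<Sum>u\<in>V - {v0}. c u * coeff (P u) ?d) = 0" by (simp add: sum.neutral)
  then have "coeff (\<Sum>u\<in>V. smult (c u) (P u)) ?d = c v0 * lead_coeff (P v0)"
    using \<open>v0 \<in> V'\<close> assms(1) by (simp add: coeff_sum sum.remove[of V v0] V'_def)
  moreover have "c v0 * lead_coeff (P v0) \<noteq> 0" using \<open>v0 \<in> V'\<close> assms(3) by (simp add: V'_def)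
  ultimately show False using assms(4) by simp
qed

lemma base_digits_unique:
  fixes B :: nat
  assumes "\<forall>p<n. x p < B" "\<forall>p<n. y p < B" "(\<Sum>p<n. x p * B ^ p) = (\<Sum>p<n. y p * B ^ p)"
  shows "\<forall>p<n. x p = y p"
  using assms
proof (induction n arbitrary: x y)
  case 0
  then show ?case by simp
next
  case (Suc n)
  have shift: "(\<Sum>p<Suc n. z p * B ^ p) = z 0 + B * (\<Sum>p<n. z (Suc p) * B ^ p)" for z
    by (simp add: sum.lessThan_Suc_shift sum_distrib_left mult.left_commute del: sum.lessThan_Suc)
  have "x 0 < B" "y 0 < B" using Suc.prems by auto
  moreover have eq: "x 0 + B * (\<Sum>p<n. x (Suc p) * B ^ p) = y 0 + B * (\<Sum>p<n. y (Suc p) * B ^ p)"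
    using Suc.prems(3) by (simp only: shift)
  ultimately have "x 0 = y 0"
    by (metis mod_mult_self2 mod_less)
  moreover have "\<forall>p<n. x (Suc p) = y (Suc p)"
    using eq \<open>x 0 = y 0\<close> \<open>x 0 < B\<close> Suc.prems(1,2)
    by (intro Suc.IH[of "\<lambda>p. x (Suc p)" "\<lambda>p. y (Suc p)"]) auto
  ultimately show ?case by (auto simp: less_Suc_eq_0_disj)
qed

lemma base_digits_unique_bij:
  fixes B :: nat
  assumes "bij_betw e A {..<n}" and "\<forall>j\<in>A. a j < B" "\<forall>j\<in>A. b j < B"
    and "(\<Sum>j\<in>A. a j * B ^ e j) = (\<Sum>j\<in>A. b j * B ^ e j)" and "j \<in> A"
  shows "a j = b j"
proof -
  let ?e' = "inv_into A e"
  have reindex: "(\<Sum>j\<in>A. z j * B ^ e j) = (\<Sum>p<n. z (?e' p) * B ^ p)" for z :: "_ \<Rightarrow> nat"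
  proof -
    have "(\<Sum>p<n. z (?e' p) * B ^ p) = (\<Sum>p<n. z (?e' p) * B ^ e (?e' p))"
      by (rule sum.cong) (simp_all add: bij_betw_inv_into_right[OF assms(1)])
    also have "\<dots> = (\<Sum>j\<in>A. z j * B ^ e j)"
      by (rule sum.reindex_bij_betw[OF bij_betw_inv_into[OF assms(1)]])
    finally show ?thesis by simp
  qed
  have "?e' p \<in> A" if "p < n" for p
    using bij_betw_apply[OF bij_betw_inv_into[OF assms(1)]] that by simp
  then have "\<forall>p<n. a (?e' p) = b (?e' p)"
    using assms(2-4) by (intro base_digits_unique) (auto simp: reindex)
  moreover have "e j < n" "?e' (e j) = j"
    using bij_betw_apply[OF assms(1) assms(5)] bij_betw_inv_into_left[OF assms(1) assms(5)] by auto
  ultimately show ?thesis by metis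
qed

definition card_greater :: "'a::{finite,linorder} \<Rightarrow> nat" where
  "card_greater j = card {j'. j < j'}"

lemma card_greater_strict_antimono: "i < j \<Longrightarrow> card_greater j < card_greater i"
  unfolding card_greater_def by (rule psubset_card_mono) auto

lemma bij_betw_card_greater: "bij_betw card_greater (UNIV :: 'a::{finite,linorder} set) {..<card (UNIV :: 'a set)}"
proof -
  have "inj (card_greater :: 'a \<Rightarrow> nat)"
    by (rule injI) (metis card_greater_strict_antimono less_irrefl linorder_cases)
  moreover have "card_greater j < card (UNIV :: 'a set)" for j :: 'a
    unfolding card_greater_def by (rule psubset_card_mono) auto
  ultimately have "range (card_greater :: 'a \<Rightarrow> nat) = {..<card (UNIV :: 'a set)}"
    by (intro card_subset_eq) (auto simp: card_image)
  with \<open>inj card_greater\<close> show ?thesis by (simp add: bij_betw_def)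
qed

definition sorted_words :: "nat \<Rightarrow> 'a::linorder list set" where
  "sorted_words d = {v. sorted v \<and> length v = d}"

lemma finite_sorted_words: "finite (sorted_words d :: 'a::{finite,linorder} list set)"
  using finite_lists_length_eq[of "UNIV :: 'a set" d] by (rule finite_subset[rotated]) (auto simp: sorted_words_def)

lemma sorted_eq_if_count_list_eq:
  assumes "sorted v" "sorted v'" "\<And>j. count_list v j = count_list v' j"
  shows "v = v'"
proof -
  have "mset v = mset v'" using assms(3) by (intro multiset_eqI) (simp add: count_mset)
  then show ?thesis using assms(1,2) by (metis properties_for_sort sorted_sort_id)
qed

text \<open>A sorted word of length \<open>d < B\<close> is determined by its letter counts, which are
  the base-\<open>B\<close> digits of this exponent.\<close>
lemma inj_on_sum_base_power_card_greater:
  assumes "d < B"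
  shows "inj_on (\<lambda>v. \<Sum>j\<leftarrow>v. B ^ card_greater j) (sorted_words d :: 'a::{finite,linorder} list set)"
proof (rule inj_onI)
  fix v v' :: "'a list"
  assume v: "v \<in> sorted_words d" and v': "v' \<in> sorted_words d"
    and eq: "(\<Sum>j\<leftarrow>v. B ^ card_greater j) = (\<Sum>j\<leftarrow>v'. B ^ card_greater j)"
  have counts: "(\<Sum>j\<leftarrow>w. B ^ card_greater j) = (\<Sum>j\<in>UNIV. count_list w j * B ^ card_greater j)"
    for w :: "'a list"
    by (rule sum_list_map_eq_sum_count2) auto
  have "count_list w j < B" if "w \<in> sorted_words d" for w j
    using count_le_length[of w j] that assms by (simp add: sorted_words_def)
  then have "count_list v j = count_list v' j" for j
    using v v' eq by (intro base_digits_unique_bij[OF bij_betw_card_greater]) (auto simp: counts)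
  then show "v = v'"
    using v v' by (intro sorted_eq_if_count_list_eq) (auto simp: sorted_words_def)
qed

section \<open>The action of the enveloping algebra on S\<close>

locale triangularizable_LR =
  fixes L :: "(('n::{finite,linorder}, 'k::field_char_0) mpoly \<Rightarrow> ('n, 'k) mpoly) set"
    and \<alpha> :: "'n \<Rightarrow> ('n, 'k) mpoly \<Rightarrow> ('n, 'k) mpoly"
  assumes triangularizable: "triangularizable L \<alpha>"
begin

lemma L_derivation: "D \<in> L \<Longrightarrow> is_derivation D"
  using triangularizable by (auto simp: triangularizable_def Der_def)

lemma L_zero: "(\<lambda>f. 0) \<in> L"
  using triangularizable by (simp add: triangularizable_def)

lemma L_add: "D \<in> L \<Longrightarrow> E \<in> L \<Longrightarrow> (\<lambda>f. D f + E f) \<in> L"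
  using triangularizable by (simp add: triangularizable_def)

lemma L_smult: "D \<in> L \<Longrightarrow> (\<lambda>f. s * D f) \<in> L"
  using triangularizable by (simp add: triangularizable_def)

lemma L_bracket: "D \<in> L \<Longrightarrow> E \<in> L \<Longrightarrow> (\<lambda>f. D (E f) - E (D f)) \<in> L"
  using triangularizable by (simp add: triangularizable_def)

lemma alpha_in_L: "\<alpha> i \<in> L"
  using triangularizable by (simp add: triangularizable_def)

lemma L_basis: "D \<in> L \<Longrightarrow> \<exists>s. D = (\<lambda>f. \<Sum>i\<in>UNIV. s i * \<alpha> i f)"
  using triangularizable by (auto simp: triangularizable_def)

lemma alpha_Var_below: "j < i \<Longrightarrow> \<alpha> i (Var j) = 0"
  using triangularizable by (simp add: triangularizable_def)

lemma alpha_Var_self: "\<alpha> i (Var i) \<noteq> 0"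
  using triangularizable by (auto simp: triangularizable_def)

lemma alpha_derivation: "is_derivation (\<alpha> i)"
  by (rule L_derivation[OF alpha_in_L])

lemma L_sum: "(\<lambda>f. \<Sum>i\<in>X. s i * \<alpha> i f) \<in> L"
  by (induction X rule: infinite_finite_induct) (simp_all add: L_zero L_add L_smult alpha_in_L)

abbreviation I :: "(('n, 'k) lrgen, 'k) freealg set" where
  "I \<equiv> twosided_ideal (UEA_relations L)"

lemma iS_add_rel: "iS (s + t) - iS s - iS t \<in> I"
  unfolding UEA_relations_def fmult_eq_times by (intro twosided_ideal.base) blast

lemma iS_mult_rel: "iS (s * t) - iS s * iS t \<in> I"
  unfolding UEA_relations_def fmult_eq_times by (intro twosided_ideal.base) blast

lemma iS_Const_rel: "iS (Const c) - fconst c \<in> I"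
  unfolding UEA_relations_def fmult_eq_times by (intro twosided_ideal.base) blast

lemma iL_add_rel: "D \<in> L \<Longrightarrow> E \<in> L \<Longrightarrow> iL (\<lambda>f. D f + E f) - iL D - iL E \<in> I"
  unfolding UEA_relations_def fmult_eq_times by (intro twosided_ideal.base) blast

lemma iL_smult_rel: "D \<in> L \<Longrightarrow> iL (\<lambda>f. s * D f) - iS s * iL D \<in> I"
  unfolding UEA_relations_def fmult_eq_times by (intro twosided_ideal.base) blast

lemma iL_bracket_rel:
  "D \<in> L \<Longrightarrow> E \<in> L \<Longrightarrow> iL D * iL E - iL E * iL D - iL (\<lambda>f. D (E f) - E (D f)) \<in> I"
  unfolding UEA_relations_def fmult_eq_times by (intro twosided_ideal.base) blast

lemma iL_iS_rel: "D \<in> L \<Longrightarrow> iL D * iS s - iS s * iL D - iS (D s) \<in> I"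
  unfolding UEA_relations_def fmult_eq_times by (intro twosided_ideal.base) blast

lemma iL_notin_L_rel: "D \<notin> L \<Longrightarrow> iL D \<in> I"
  unfolding UEA_relations_def fmult_eq_times by (intro twosided_ideal.base) blast

lemma iS_zero_in_I: "iS 0 \<in> I"
  using twosided_ideal_uminus[OF iS_add_rel[of 0 0]] by simp

lemma sum_iS_add_rel:
  "(\<Sum>v\<in>V. iS (c v + c' v) * x v) - ((\<Sum>v\<in>V. iS (c v) * x v) + (\<Sum>v\<in>V. iS (c' v) * x v)) \<in> I"
proof -
  have "(\<Sum>v\<in>V. (iS (c v + c' v) - iS (c v) - iS (c' v)) * x v) \<in> I"
    by (intro twosided_ideal_sum twosided_ideal_mult_right iS_add_rel)
  then show ?thesis by (simp add: algebra_simps sum.distrib sum_subtractf)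
qed

lemma sum_iS_zero_in_I: "(\<Sum>v\<in>V. iS 0 * x v) \<in> I"
  by (intro twosided_ideal_sum twosided_ideal_mult_right iS_zero_in_I)

lemma sum_iS_single_rel:
  assumes "finite V" "v0 \<in> V"
  shows "(\<Sum>v\<in>V. iS (if v = v0 then s else 0) * x v) - iS s * x v0 \<in> I"
proof -
  have "(\<Sum>v\<in>V - {v0}. iS (if v = v0 then s else 0) * x v) = (\<Sum>v\<in>V - {v0}. iS 0 * x v)"
    by (rule sum.cong) auto
  then show ?thesis
    using assms sum_iS_zero_in_I[where V = "V - {v0}" and x = x] by (simp add: sum.remove[of V v0])
qed

definition act_gen :: "('n, 'k) lrgen \<Rightarrow> ('n, 'k) mpoly \<Rightarrow> ('n, 'k) mpoly" where
  "act_gen x f = (case x of Inl s \<Rightarrow> s * f | Inr D \<Rightarrow> if D \<in> L then D f else 0)"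

definition rep :: "(('n, 'k) lrgen, 'k) freealg \<Rightarrow> ('n, 'k) mpoly \<Rightarrow> ('n, 'k) mpoly" where
  "rep p f = (\<Sum>w\<in>Poly_Mapping.keys p. Const (Poly_Mapping.lookup p w) * foldr act_gen w f)"

lemma foldr_act_gen_add: "foldr act_gen w (f + g) = foldr act_gen w f + foldr act_gen w g"
  by (induction w) (auto simp: act_gen_def algebra_simps derivation_add L_derivation split: sum.split)

lemma foldr_act_gen_Const_mult: "foldr act_gen w (Const c * f) = Const c * foldr act_gen w f"
  by (induction w) (auto simp: act_gen_def derivation_Const_mult L_derivation split: sum.split)

lemma foldr_act_gen_zero: "foldr act_gen w 0 = 0"
  using foldr_act_gen_add[of w 0 0] by simp

lemma foldr_act_gen_sum: "foldr act_gen w (sum h X) = (\<Sum>x\<in>X. foldr act_gen w (h x))"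
  by (induction X rule: infinite_finite_induct) (simp_all add: foldr_act_gen_zero foldr_act_gen_add)

lemma rep_eq_sum_superset:
  "finite K \<Longrightarrow> Poly_Mapping.keys p \<subseteq> K \<Longrightarrow>
   rep p f = (\<Sum>w\<in>K. Const (Poly_Mapping.lookup p w) * foldr act_gen w f)"
  unfolding rep_def by (rule sum.mono_neutral_left) (auto simp: in_keys_iff)

lemma rep_add: "rep (p + q) f = rep p f + rep q f"
proof -
  let ?K = "Poly_Mapping.keys p \<union> Poly_Mapping.keys q"
  show ?thesis
    by (simp add: rep_eq_sum_superset[OF _ keys_add] rep_eq_sum_superset[of ?K p]
        rep_eq_sum_superset[of ?K q] lookup_add Const_add algebra_simps sum.distrib)
qed

lemma rep_zero [simp]: "rep 0 f = 0"
  by (simp add: rep_def)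

lemma rep_diff: "rep (p - q) f = rep p f - rep q f"
  using rep_add[of "p - q" q f] by simp

lemma rep_sum: "rep (sum h X) f = (\<Sum>x\<in>X. rep (h x) f)"
  by (induction X rule: infinite_finite_induct) (simp_all add: rep_add)

lemma rep_single: "rep (Poly_Mapping.single w c) f = Const c * foldr act_gen w f"
  by (simp add: rep_eq_sum_superset[of "{w}"])

lemma rep_at_zero: "rep p 0 = 0"
  by (simp add: rep_def foldr_act_gen_zero)

lemma rep_mult: "rep (p * q) f = rep p (rep q f)"
proof -
  have "p * q = (\<Sum>u\<in>Poly_Mapping.keys p. \<Sum>v\<in>Poly_Mapping.keys q.
                   Poly_Mapping.single (u @ v) (Poly_Mapping.lookup p u * Poly_Mapping.lookup q v))"
    by (simp add: fmult_eq_times[symmetric] fmult_def)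
  then have "rep (p * q) f = (\<Sum>u\<in>Poly_Mapping.keys p. \<Sum>v\<in>Poly_Mapping.keys q.
      Const (Poly_Mapping.lookup p u) * (Const (Poly_Mapping.lookup q v) * foldr act_gen u (foldr act_gen v f)))"
    by (simp add: rep_sum rep_single Const_mult mult.assoc)
  also have "\<dots> = rep p (rep q f)"
    by (simp add: rep_def foldr_act_gen_sum foldr_act_gen_Const_mult sum_distrib_left)
  finally show ?thesis .
qed

lemma rep_iS: "rep (iS s) f = s * f"
  by (simp add: iS_def fgen_def rep_single act_gen_def)

lemma rep_iL: "rep (iL D) f = (if D \<in> L then D f else 0)"
  by (simp add: iL_def fgen_def rep_single act_gen_def)

lemma rep_fconst: "rep (fconst c) f = Const c * f"
  by (simp add: fconst_def rep_single)

lemma rep_one: "rep 1 f = f"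
  by (simp add: one_freealg rep_single)

lemma rep_relation: "r \<in> UEA_relations L \<Longrightarrow> rep r f = 0"
  unfolding UEA_relations_def fmult_eq_times
  by (elim UnE CollectE exE conjE; hypsubst; simp add: rep_diff rep_add rep_mult rep_iS rep_iL rep_fconst
      L_add L_smult L_bracket derivation_mult L_derivation algebra_simps)

lemma rep_ideal: "a \<in> I \<Longrightarrow> rep a f = 0"
proof (induction a arbitrary: f rule: twosided_ideal.induct)
  case (base r)
  then show ?case by (rule rep_relation)
qed (simp_all add: rep_add fmult_eq_times rep_mult rep_at_zero)

section \<open>The order filtration\<close>

definition alpha_word :: "'n list \<Rightarrow> (('n, 'k) lrgen, 'k) freealg" where
  "alpha_word w = (\<Prod>i\<leftarrow>w. iL (\<alpha> i))"

lemma alpha_word_Nil [simp]: "alpha_word [] = 1"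
  by (simp add: alpha_word_def)

lemma alpha_word_Cons: "alpha_word (i # w) = iL (\<alpha> i) * alpha_word w"
  by (simp add: alpha_word_def)

lemma alpha_word_append: "alpha_word (u @ v) = alpha_word u * alpha_word v"
  by (simp add: alpha_word_def)

lemma rep_alpha_word: "rep (alpha_word w) f = foldr \<alpha> w f"
  by (induction w) (simp_all add: rep_one alpha_word_Cons rep_mult rep_iL alpha_in_L)

inductive_set filt :: "nat \<Rightarrow> (('n, 'k) lrgen, 'k) freealg set" for m where
  gen: "length w \<le> m \<Longrightarrow> iS s * alpha_word w \<in> filt m"
| add: "a \<in> filt m \<Longrightarrow> b \<in> filt m \<Longrightarrow> a + b \<in> filt m"
| ideal: "a \<in> I \<Longrightarrow> a \<in> filt m"

lemma filt_cong: "a \<in> filt m \<Longrightarrow> a - b \<in> I \<Longrightarrow> b \<in> filt m"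
  using filt.add[OF _ filt.ideal[OF twosided_ideal_uminus]] by fastforce

lemma filt_mono: "a \<in> filt m \<Longrightarrow> m \<le> m' \<Longrightarrow> a \<in> filt m'"
  by (induction a rule: filt.induct) (auto intro: filt.intros)

lemma filt_sum: "(\<And>x. x \<in> X \<Longrightarrow> f x \<in> filt m) \<Longrightarrow> sum f X \<in> filt m"
  by (induction X rule: infinite_finite_induct)
    (auto intro: filt.add filt.ideal twosided_ideal.zero)

lemma filt_iS_mult: "a \<in> filt m \<Longrightarrow> iS t * a \<in> filt m"
proof (induction a rule: filt.induct)
  case (gen w s)
  have "iS (t * s) * alpha_word w - iS t * (iS s * alpha_word w)
        = (iS (t * s) - iS t * iS s) * alpha_word w"
    by (simp add: algebra_simps)
  then show ?case
    using filt_cong[OF filt.gen[OF gen]] twosided_ideal_mult_right[OF iS_mult_rel] by metis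
qed (simp_all add: distrib_left filt.add filt.ideal twosided_ideal_mult_left)

lemma filt_uminus: "a \<in> filt m \<Longrightarrow> - a \<in> filt m"
proof -
  assume "a \<in> filt m"
  moreover have "iS (Const (-1)) * a - (- a) = (iS (Const (-1)) - fconst (-1)) * a"
    by (simp add: algebra_simps fconst_uminus_one)
  ultimately show ?thesis
    using filt_cong[OF filt_iS_mult] twosided_ideal_mult_right[OF iS_Const_rel] by metis
qed

lemma filt_diff: "a \<in> filt m \<Longrightarrow> b \<in> filt m \<Longrightarrow> a - b \<in> filt m"
  using filt.add[OF _ filt_uminus, of a m b] by simp

lemma filt_alpha_mult: "a \<in> filt m \<Longrightarrow> iL (\<alpha> i) * a \<in> filt (Suc m)"
proof (induction a rule: filt.induct)
  case (gen w s)
  have "iS s * alpha_word (i # w) + iS (\<alpha> i s) * alpha_word w \<in> filt (Suc m)"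
    using gen by (intro filt.add filt.gen) auto
  moreover have "iS s * alpha_word (i # w) + iS (\<alpha> i s) * alpha_word w - iL (\<alpha> i) * (iS s * alpha_word w)
     = - ((iL (\<alpha> i) * iS s - iS s * iL (\<alpha> i) - iS (\<alpha> i s)) * alpha_word w)"
    by (simp add: algebra_simps alpha_word_Cons)
  ultimately show ?case
    using filt_cong twosided_ideal_uminus[OF twosided_ideal_mult_right[OF iL_iS_rel[OF alpha_in_L]]]
    by metis
qed (simp_all add: distrib_left filt.add filt.ideal twosided_ideal_mult_left)

lemma iL_zero_in_I: "iL (\<lambda>f. 0) \<in> I"
  using twosided_ideal_uminus[OF iL_add_rel[OF L_zero L_zero]] by simp

lemma iL_sum_rel:
  "finite X \<Longrightarrow> iL (\<lambda>f. \<Sum>i\<in>X. s i * \<alpha> i f) - (\<Sum>i\<in>X. iS (s i) * iL (\<alpha> i)) \<in> I"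
proof (induction X rule: finite_induct)
  case empty
  then show ?case by (simp add: iL_zero_in_I)
next
  case (insert x X)
  let ?D = "\<lambda>f. s x * \<alpha> x f" and ?E = "\<lambda>f. \<Sum>i\<in>X. s i * \<alpha> i f"
  have "(iL (\<lambda>f. ?D f + ?E f) - iL ?D - iL ?E) + (iL ?D - iS (s x) * iL (\<alpha> x))
        + (iL ?E - (\<Sum>i\<in>X. iS (s i) * iL (\<alpha> i))) \<in> I"
    using insert.IH
    by (intro twosided_ideal.add iL_add_rel iL_smult_rel L_smult L_sum alpha_in_L)
  then show ?case
    using insert.hyps by (simp add: algebra_simps)
qed

lemma filt_iL_mult: "a \<in> filt m \<Longrightarrow> iL D * a \<in> filt (Suc m)"
proof (cases "D \<in> L")
  case True
  assume a: "a \<in> filt m"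
  obtain s where s: "D = (\<lambda>f. \<Sum>i\<in>UNIV. s i * \<alpha> i f)"
    using L_basis[OF True] by blast
  have "(\<Sum>i\<in>UNIV. iS (s i) * (iL (\<alpha> i) * a)) \<in> filt (Suc m)"
    by (intro filt_sum filt_iS_mult filt_alpha_mult a)
  moreover have "iL D - (\<Sum>i\<in>UNIV. iS (s i) * iL (\<alpha> i)) \<in> I"
    using iL_sum_rel[of UNIV s] s by simp
  then have "(\<Sum>i\<in>UNIV. iS (s i) * (iL (\<alpha> i) * a)) - iL D * a \<in> I"
    using twosided_ideal_uminus[OF twosided_ideal_mult_right]
    by (force simp: algebra_simps sum_distrib_right)
  ultimately show ?thesis by (rule filt_cong)
next
  case False
  then show ?thesis
    using twosided_ideal_mult_right[OF iL_notin_L_rel] by (auto intro: filt.ideal)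
qed

lemma filt_single: "Poly_Mapping.single w c \<in> filt (length w)"
proof (induction w)
  case Nil
  have "iS (Const c) * alpha_word [] \<in> filt 0" by (rule filt.gen) simp
  then show ?case
    using filt_cong iS_Const_rel[of c] by (simp add: fconst_def)
next
  case (Cons x w)
  have "fgen x * Poly_Mapping.single w c \<in> filt (Suc (length w))"
  proof (cases x)
    case (Inl s)
    then show ?thesis
      using filt_mono[OF filt_iS_mult[OF Cons.IH]] by (simp add: iS_def)
  next
    case (Inr D)
    then show ?thesis
      using filt_iL_mult[OF Cons.IH] by (simp add: iL_def)
  qed
  then show ?case by (simp add: single_Cons)
qed

lemma filt_exhaustive: "\<exists>m. p \<in> filt m"
proof -
  let ?m = "Max (length ` Poly_Mapping.keys p)"
  have "(\<Sum>w\<in>Poly_Mapping.keys p. Poly_Mapping.single w (Poly_Mapping.lookup p w)) \<in> filt ?m"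
    by (intro filt_sum filt_mono[OF filt_single]) auto
  then show ?thesis
    by (subst poly_mapping_sum_single) blast
qed

lemma filt_mult_alpha_word: "a \<in> filt m \<Longrightarrow> a * alpha_word v \<in> filt (m + length v)"
  by (induction a rule: filt.induct)
    (simp_all add: mult.assoc alpha_word_append[symmetric] distrib_right filt.gen filt.add
      filt.ideal twosided_ideal_mult_right)

lemma filt_alpha_commutator: "iL (\<alpha> i) * iL (\<alpha> j) - iL (\<alpha> j) * iL (\<alpha> i) \<in> filt 1"
proof -
  have "iL (\<lambda>f. \<alpha> i (\<alpha> j f) - \<alpha> j (\<alpha> i f)) \<in> filt 1"
    using filt_iL_mult[OF filt_single[of "[]" 1]] by (simp add: one_freealg[symmetric])
  then show ?thesis
    using filt_cong twosided_ideal_uminus[OF iL_bracket_rel[OF alpha_in_L alpha_in_L, of i j]]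
    by fastforce
qed

lemma filt_insort: "alpha_word (i # v) - alpha_word (insort i v) \<in> filt (length v)"
proof (induction v)
  case Nil
  then show ?case by (simp add: filt.ideal twosided_ideal.zero)
next
  case (Cons j v)
  show ?case
  proof (cases "i \<le> j")
    case True
    then show ?thesis by (simp add: filt.ideal twosided_ideal.zero)
  next
    case False
    have "(iL (\<alpha> i) * iL (\<alpha> j) - iL (\<alpha> j) * iL (\<alpha> i)) * alpha_word v
          + iL (\<alpha> j) * (alpha_word (i # v) - alpha_word (insort i v)) \<in> filt (Suc (length v))"
      using filt_mult_alpha_word[OF filt_alpha_commutator] filt_alpha_mult[OF Cons.IH]
      by (intro filt.add) simp_all
    then show ?thesis
      using False by (simp add: alpha_word_Cons algebra_simps)
  qed
qed

lemma filt_sort: "alpha_word w - alpha_word (sort w) \<in> filt (length w - 1)"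
proof (induction w)
  case Nil
  then show ?case by (simp add: filt.ideal twosided_ideal.zero)
next
  case (Cons i w)
  have "iL (\<alpha> i) * (alpha_word w - alpha_word (sort w)) \<in> filt (length w)"
    using filt_alpha_mult[OF Cons.IH] filt.ideal[OF twosided_ideal.zero]
    by (cases w) simp_all
  with filt_insort[of i "sort w"]
  have "iL (\<alpha> i) * (alpha_word w - alpha_word (sort w))
        + (alpha_word (i # sort w) - alpha_word (insort i (sort w))) \<in> filt (length w)"
    by (intro filt.add) simp_all
  then show ?case
    by (simp add: alpha_word_Cons algebra_simps)
qed

lemma filt_0_imp_iS: "a \<in> filt 0 \<Longrightarrow> \<exists>s. a - iS s \<in> I"
proof (induction a rule: filt.induct)
  case (gen w s)
  then show ?case by (auto intro!: exI[of _ s] twosided_ideal.zero)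
next
  case (add a b)
  then obtain s t where "a - iS s \<in> I" "b - iS t \<in> I" by blast
  then have "(a - iS s) + (b - iS t) - (iS (s + t) - iS s - iS t) \<in> I"
    by (intro twosided_ideal_diff[OF twosided_ideal.add iS_add_rel])
  then show ?case by (auto simp: algebra_simps)
next
  case (ideal a)
  then show ?case using twosided_ideal_diff[OF _ iS_zero_in_I] by blast
qed

text \<open>The spanning half of the Poincare-Birkhoff-Witt theorem.\<close>
lemma filt_Suc_leading_form:
  "a \<in> filt (Suc m) \<Longrightarrow>
   \<exists>c. a - (\<Sum>v\<in>sorted_words (Suc m). iS (c v) * alpha_word v) \<in> filt m"
proof (induction a rule: filt.induct)
  case (gen w s)
  show ?case
  proof (cases "length w = Suc m")
    case True
    let ?c = "\<lambda>v. if v = sort w then s else 0"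
    have "iS s * (alpha_word w - alpha_word (sort w)) \<in> filt m"
      using filt_iS_mult[OF filt_sort[of w]] True by simp
    moreover have "sort w \<in> sorted_words (Suc m)"
      using True by (simp add: sorted_words_def)
    then have "(\<Sum>v\<in>sorted_words (Suc m). iS (?c v) * alpha_word v) - iS s * alpha_word (sort w) \<in> I"
      by (intro sum_iS_single_rel finite_sorted_words)
    ultimately have "iS s * (alpha_word w - alpha_word (sort w))
        - ((\<Sum>v\<in>sorted_words (Suc m). iS (?c v) * alpha_word v) - iS s * alpha_word (sort w)) \<in> filt m"
      by (intro filt_diff[OF _ filt.ideal])
    then show ?thesis by (auto simp: algebra_simps)
  next
    case False
    then have "iS s * alpha_word w - (\<Sum>v\<in>sorted_words (Suc m). iS 0 * alpha_word v) \<in> filt m"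
      using gen by (intro filt_diff filt.gen filt.ideal sum_iS_zero_in_I) auto
    then show ?thesis by (rule exI[of _ "\<lambda>_. 0"])
  qed
next
  case (add a b)
  then obtain c c' where
    "a - (\<Sum>v\<in>sorted_words (Suc m). iS (c v) * alpha_word v) \<in> filt m"
    "b - (\<Sum>v\<in>sorted_words (Suc m). iS (c' v) * alpha_word v) \<in> filt m"
    by blast
  then have "(a - (\<Sum>v\<in>sorted_words (Suc m). iS (c v) * alpha_word v))
      + (b - (\<Sum>v\<in>sorted_words (Suc m). iS (c' v) * alpha_word v))
      - ((\<Sum>v\<in>sorted_words (Suc m). iS (c v + c' v) * alpha_word v)
         - ((\<Sum>v\<in>sorted_words (Suc m). iS (c v) * alpha_word v)
            + (\<Sum>v\<in>sorted_words (Suc m). iS (c' v) * alpha_word v))) \<in> filt m"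
    by (intro filt_diff[OF filt.add filt.ideal[OF sum_iS_add_rel]])
  then show ?case
    by (intro exI[of _ "\<lambda>v. c v + c' v"]) (simp add: algebra_simps)
next
  case (ideal a)
  then have "a - (\<Sum>v\<in>sorted_words (Suc m). iS 0 * alpha_word v) \<in> filt m"
    by (intro filt.ideal twosided_ideal_diff sum_iS_zero_in_I)
  then show ?case by (rule exI[of _ "\<lambda>_. 0"])
qed

section \<open>Principal symbols and faithfulness\<close>

lemma foldr_alpha_power_expansion:
  "\<exists>Q. degree Q \<le> length w \<and> coeff Q (length w) = (\<Prod>i\<leftarrow>w. \<alpha> i g) \<and>
       (\<forall>N. g ^ length w * foldr \<alpha> w (g ^ N) = g ^ N * poly Q (of_nat N))"
  using derivations_power_expansion[of "map \<alpha> w" g] by (simp add: alpha_derivation foldr_map o_def)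

lemma filt_power_expansion:
  "a \<in> filt m \<Longrightarrow> \<exists>Q. degree Q \<le> m \<and> (\<forall>N. g ^ m * rep a (g ^ N) = g ^ N * poly Q (of_nat N))"
proof (induction a rule: filt.induct)
  case (gen w s)
  obtain Q where "degree Q \<le> length w"
    and Q: "\<And>N. g ^ length w * foldr \<alpha> w (g ^ N) = g ^ N * poly Q (of_nat N)"
    using foldr_alpha_power_expansion[of w g] by blast
  moreover have "g ^ m * rep (iS s * alpha_word w) (g ^ N)
                 = g ^ N * poly (smult (g ^ (m - length w) * s) Q) (of_nat N)" for N
  proof -
    have "g ^ m = g ^ (m - length w) * g ^ length w"
      using gen by (simp flip: power_add)
    then show ?thesis
      by (simp add: rep_mult rep_iS rep_alpha_word Q algebra_simps)
  qed
  ultimately show ?case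
    using gen by (intro exI[of _ "smult (g ^ (m - length w) * s) Q"]) (auto intro: le_trans[OF degree_smult_le])
next
  case (add a b)
  then obtain Q Q' where "degree Q \<le> m" "\<forall>N. g ^ m * rep a (g ^ N) = g ^ N * poly Q (of_nat N)"
    "degree Q' \<le> m" "\<forall>N. g ^ m * rep b (g ^ N) = g ^ N * poly Q' (of_nat N)"
    by blast
  then show ?case
    by (intro exI[of _ "Q + Q'"]) (simp add: degree_add_le rep_add algebra_simps)
next
  case (ideal a)
  then show ?case
    by (intro exI[of _ 0]) (simp add: rep_ideal)
qed

lemma leading_form_power_expansion:
  assumes lead: "a - (\<Sum>v\<in>V. iS (c v) * alpha_word v) \<in> filt m"
    and V: "\<And>v. v \<in> V \<Longrightarrow> length v = Suc m"
  shows "\<exists>Q. coeff Q (Suc m) = (\<Sum>v\<in>V. c v * (\<Prod>i\<leftarrow>v. \<alpha> i g)) \<and>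
             (\<forall>N. g ^ Suc m * rep a (g ^ N) = g ^ N * poly Q (of_nat N))"
proof -
  have "\<forall>v. \<exists>Q. degree Q \<le> length v \<and> coeff Q (length v) = (\<Prod>i\<leftarrow>v. \<alpha> i g) \<and>
               (\<forall>N. g ^ length v * foldr \<alpha> v (g ^ N) = g ^ N * poly Q (of_nat N))"
    using foldr_alpha_power_expansion by blast
  then obtain Qw where Qw_top: "\<And>v. coeff (Qw v) (length v) = (\<Prod>i\<leftarrow>v. \<alpha> i g)"
    and Qw: "\<And>v N. g ^ length v * foldr \<alpha> v (g ^ N) = g ^ N * poly (Qw v) (of_nat N)"
    by metis
  obtain Qr where "degree Qr \<le> m"
    and Qr: "\<And>N. g ^ m * rep (a - (\<Sum>v\<in>V. iS (c v) * alpha_word v)) (g ^ N) = g ^ N * poly Qr (of_nat N)"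
    using filt_power_expansion[OF lead] by blast
  define Q where "Q = (\<Sum>v\<in>V. smult (c v) (Qw v)) + smult g Qr"
  have "coeff Q (Suc m) = (\<Sum>v\<in>V. c v * coeff (Qw v) (Suc m))"
    using \<open>degree Qr \<le> m\<close> by (simp add: Q_def coeff_sum coeff_eq_0)
  also have "\<dots> = (\<Sum>v\<in>V. c v * (\<Prod>i\<leftarrow>v. \<alpha> i g))"
    by (rule sum.cong) (simp_all add: Qw_top[symmetric] V)
  finally have "coeff Q (Suc m) = (\<Sum>v\<in>V. c v * (\<Prod>i\<leftarrow>v. \<alpha> i g))" .
  moreover have "g ^ Suc m * rep a (g ^ N) = g ^ N * poly Q (of_nat N)" for N
  proof -
    have "g ^ N * poly Q (of_nat N) = (\<Sum>v\<in>V. c v * (g ^ length v * foldr \<alpha> v (g ^ N)))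
             + g * (g ^ m * rep (a - (\<Sum>v\<in>V. iS (c v) * alpha_word v)) (g ^ N))"
      by (simp add: Q_def Qw Qr poly_sum sum_distrib_left algebra_simps)
    also have "\<dots> = g ^ Suc m * rep a (g ^ N)"
      using V by (simp add: rep_diff rep_sum rep_mult rep_iS rep_alpha_word sum_distrib_left algebra_simps)
    finally show ?thesis by simp
  qed
  ultimately show ?thesis by blast
qed

text \<open>Characteristic zero enters here: a polynomial vanishing at all naturals is zero.\<close>
lemma principal_symbol_vanishes:
  assumes "a - (\<Sum>v\<in>V. iS (c v) * alpha_word v) \<in> filt m"
    and V: "\<And>v. v \<in> V \<Longrightarrow> length v = Suc m"
    and zero: "\<And>f. rep a f = 0"
  shows "(\<Sum>v\<in>V. c v * (\<Prod>i\<leftarrow>v. \<alpha> i g)) = 0"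
proof (cases "g = 0")
  case True
  have "(\<Prod>i\<leftarrow>v. \<alpha> i g) = 0" if "v \<in> V" for v
    using V[OF that] True derivation_zero[OF alpha_derivation] by (cases v) auto
  then show ?thesis by simp
next
  case False
  obtain Q where top: "coeff Q (Suc m) = (\<Sum>v\<in>V. c v * (\<Prod>i\<leftarrow>v. \<alpha> i g))"
    and expand: "\<And>N. g ^ Suc m * rep a (g ^ N) = g ^ N * poly Q (of_nat N)"
    using leading_form_power_expansion[OF assms(1) V] by blast
  have "Q = 0"
    using expand[unfolded zero] False by (intro poly_eq_0_if_zero_at_nats) simp
  then show ?thesis using top by simp
qed

definition alpha_poly :: "nat \<Rightarrow> 'n \<Rightarrow> ('n, 'k) mpoly poly" where
  "alpha_poly B i = (\<Sum>j\<in>UNIV. monom (\<alpha> i (Var j)) (B ^ card_greater j))"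

lemma poly_alpha_poly:
  "poly (alpha_poly B i) (of_nat T) = \<alpha> i (\<Sum>j\<in>UNIV. of_nat T ^ (B ^ card_greater j) * Var j)"
  unfolding of_nat_power[symmetric] derivation_sum[OF alpha_derivation]
    derivation_of_nat_mult[OF alpha_derivation]
  by (simp add: alpha_poly_def poly_sum poly_monom mult.commute)

text \<open>By triangularity only the terms with \<open>i \<le> j\<close> survive, and \<open>j = i\<close> has the largest exponent.\<close>
lemma degree_alpha_poly:
  assumes "1 < B"
  shows "degree (alpha_poly B i) = B ^ card_greater i" and "alpha_poly B i \<noteq> 0"
proof -
  let ?e = "\<lambda>j. B ^ card_greater j"
  have e_less: "?e j < ?e i" if "i < j" for i j
    by (rule power_strict_increasing[OF card_greater_strict_antimono[OF that] assms])
  have coeff: "coeff (alpha_poly B i) n = (\<Sum>j\<in>UNIV. if ?e j = n then \<alpha> i (Var j) else 0)" for n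
    by (simp add: alpha_poly_def coeff_sum coeff_monom)
  have "coeff (alpha_poly B i) n = 0" if "?e i < n" for n
    unfolding coeff
  proof (intro sum.neutral ballI)
    fix j
    show "(if ?e j = n then \<alpha> i (Var j) else 0) = 0"
      using that e_less[of i j] alpha_Var_below[of j i] by (cases i j rule: linorder_cases) auto
  qed
  moreover have "coeff (alpha_poly B i) (?e i) = \<alpha> i (Var i)"
  proof -
    have "(\<Sum>j\<in>UNIV - {i}. if ?e j = ?e i then \<alpha> i (Var j) else 0) = 0"
    proof (rule sum.neutral, rule ballI)
      fix j
      assume "j \<in> UNIV - {i}"
      then show "(if ?e j = ?e i then \<alpha> i (Var j) else 0) = 0"
        using e_less[of i j] e_less[of j i] by (cases i j rule: linorder_cases) auto
    qed
    then show ?thesis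
      unfolding coeff by (subst sum.remove[of UNIV i]) simp_all
  qed
  ultimately show "degree (alpha_poly B i) = ?e i"
    using alpha_Var_self[of i] by (intro antisym[OF degree_le le_degree]) auto
  then show "alpha_poly B i \<noteq> 0"
    using \<open>coeff (alpha_poly B i) (?e i) = \<alpha> i (Var i)\<close> alpha_Var_self[of i] by auto
qed

text \<open>Substituting \<open>g = \<Sum>j. T ^ (B ^ card_greater j) * Var j\<close> turns the products
  \<open>\<Prod>i\<leftarrow>v. \<alpha> i g\<close> into polynomials in \<open>T\<close> of pairwise distinct degrees.\<close>
lemma principal_symbols_independent:
  assumes zero: "\<And>g. (\<Sum>v\<in>sorted_words d. c v * (\<Prod>i\<leftarrow>v. \<alpha> i g)) = 0"
    and v: "v \<in> sorted_words d"
  shows "c v = 0"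
proof -
  let ?B = "d + 2"
  define P where "P v = (\<Prod>i\<leftarrow>v. alpha_poly ?B i)" for v
  have "(\<Sum>v\<in>sorted_words d. smult (c v) (P v)) = 0"
  proof (rule poly_eq_0_if_zero_at_nats)
    fix T
    show "poly (\<Sum>v\<in>sorted_words d. smult (c v) (P v)) (of_nat T) = 0"
      using zero by (simp add: P_def poly_sum poly_prod_list_map poly_alpha_poly)
  qed
  moreover have "P v \<noteq> 0" for v
    using degree_alpha_poly(2) by (auto simp: P_def prod_list_zero_iff)
  moreover have "degree (P v) = (\<Sum>i\<leftarrow>v. ?B ^ card_greater i)" for v
    unfolding P_def by (subst degree_prod_list_eq) (auto simp: degree_alpha_poly o_def)
  then have "inj_on (\<lambda>v. degree (P v)) (sorted_words d)"
    using inj_on_sum_base_power_card_greater[of d ?B] by simp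
  ultimately show ?thesis
    using finite_sorted_words v by (intro poly_lin_indep_distinct_degrees[of "sorted_words d" P c])
qed

theorem rep_faithful: "a \<in> filt m \<Longrightarrow> (\<And>f. rep a f = 0) \<Longrightarrow> a \<in> I"
proof (induction m arbitrary: a)
  case 0
  then obtain s where s: "a - iS s \<in> I"
    using filt_0_imp_iS by blast
  have "s = 0"
    using rep_ideal[OF s, of 1] 0 by (simp add: rep_diff rep_iS)
  then show ?case
    using twosided_ideal.add[OF s iS_zero_in_I] by simp
next
  case (Suc m)
  let ?W = "sorted_words (Suc m)"
  obtain c where lead: "a - (\<Sum>v\<in>?W. iS (c v) * alpha_word v) \<in> filt m"
    using filt_Suc_leading_form[OF Suc.prems(1)] by blast
  have "(\<Sum>v\<in>?W. c v * (\<Prod>i\<leftarrow>v. \<alpha> i g)) = 0" for g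
    by (rule principal_symbol_vanishes[OF lead _ Suc.prems(2)])
      (simp add: sorted_words_def)
  then have "c v = 0" if "v \<in> ?W" for v
    using that by (rule principal_symbols_independent)
  then have "(\<Sum>v\<in>?W. iS (c v) * alpha_word v) = (\<Sum>v\<in>?W. iS 0 * alpha_word v)"
    by (intro sum.cong) simp_all
  then have top: "(\<Sum>v\<in>?W. iS (c v) * alpha_word v) \<in> I"
    using sum_iS_zero_in_I by simp
  have "a - (\<Sum>v\<in>?W. iS (c v) * alpha_word v) \<in> I"
    using lead by (rule Suc.IH) (simp add: rep_diff Suc.prems(2) rep_ideal[OF top])
  from twosided_ideal.add[OF this top] show ?case by simp
qed

lemma iS_in_I_imp_zero: "iS s \<in> I \<Longrightarrow> s = 0"
  using rep_ideal[of "iS s" 1] by (simp add: rep_iS)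

lemma centralizer_eq_iS: "(\<forall>s. u * iS s - iS s * u \<in> I) \<longleftrightarrow> (\<exists>s. u - iS s \<in> I)"
proof
  assume commutes: "\<forall>s. u * iS s - iS s * u \<in> I"
  define c where "c = rep u 1"
  have rep_u: "rep u f = f * c" for f
  proof -
    have "rep (u * iS f - iS f * u) 1 = 0"
      using commutes by (intro rep_ideal) blast
    then show ?thesis by (simp add: rep_diff rep_mult rep_iS c_def)
  qed
  obtain m where "u - iS c \<in> filt m"
    using filt_exhaustive by blast
  then have "u - iS c \<in> I"
    by (rule rep_faithful) (simp add: rep_diff rep_iS rep_u mult.commute)
  then show "\<exists>s. u - iS s \<in> I" ..
next
  assume "\<exists>s. u - iS s \<in> I"
  then obtain s where s: "u - iS s \<in> I" ..
  show "\<forall>t. u * iS t - iS t * u \<in> I"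
  proof
    fix t
    have "u * iS t - iS t * u = (u - iS s) * iS t - iS t * (u - iS s)
          + ((iS (t * s) - iS t * iS s) - (iS (s * t) - iS s * iS t))"
      by (simp add: mult.commute[of t s] algebra_simps)
    also have "\<dots> \<in> I"
      by (rule twosided_ideal.add[OF
            twosided_ideal_diff[OF twosided_ideal_mult_right[OF s] twosided_ideal_mult_left[OF s]]
            twosided_ideal_diff[OF iS_mult_rel iS_mult_rel]])
    finally show "u * iS t - iS t * u \<in> I" .
  qed
qed

end

theorem proposition3p3:
  fixes L :: "(('n::{finite,linorder}, 'k::field_char_0) mpoly \<Rightarrow> ('n, 'k) mpoly) set"
    and \<alpha> :: "'n \<Rightarrow> ('n, 'k) mpoly \<Rightarrow> ('n, 'k) mpoly"
  assumes "triangularizable L \<alpha>"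
  shows "(\<forall>s. iS s \<in> UEA_ideal L \<longrightarrow> s = 0) \<and>
         (\<forall>u :: (('n, 'k) lrgen, 'k) freealg.
            (\<forall>s. fmult u (iS s) - fmult (iS s) u \<in> UEA_ideal L) \<longleftrightarrow>
            (\<exists>s. u - iS s \<in> UEA_ideal L))"
proof -
  interpret triangularizable_LR L \<alpha> by unfold_locales (rule assms)
  have "\<forall>s. iS s \<in> I \<longrightarrow> s = 0"
    using iS_in_I_imp_zero by blast
  moreover have "\<forall>u. (\<forall>s. u * iS s - iS s * u \<in> I) \<longleftrightarrow> (\<exists>s. u - iS s \<in> I)"
    using centralizer_eq_iS by blast
  ultimately show ?thesis
    unfolding UEA_ideal_def fmult_eq_times by (intro conjI)
qed

end
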